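(* Let $X$ be a real Hausdorff locally convex topological vector space, let $f:X\to\overline{\mathbb R}$ be proper, convex and lower semicontinuous, and let $U\subseteq\operatorname{dom} f$ be self-segment-dense in $\operatorname{dom} f$. Assume further that $\operatorname{co}(U)$ is segment-dense in $\operatorname{dom} f$. Then $\overline{f_U}=\overline{f_{\operatorname{co}(U)}}=f$ on $X$ and $\inf_{x\in U}f(x)=\inf_{x\in X}f(x)$.
   Context: $\overline{\mathbb R}=\mathbb R\cup\{\pm\infty\}$; $\operatorname{dom} f=\{x:f(x)<+\infty\}$; proper: $\operatorname{dom} f\ne\emptyset$ and $f>-\infty$. $\operatorname{co}$ is the convex hull. For $W\subseteq\operatorname{dom} f$: $\operatorname{epi} f_W=\{(w,r)\in W\times\mathbb R:f(w)\le r\}$ and $\overline{f_W}$ is the function on $X$ whose epigraph is $\operatorname{cl}(\operatorname{epi} f_W)$ in $X\times\mathbb R$. $[x,y]=\{x+t(y-x):t\in[0,1]\}$. Self-segment-dense: for convex $V$ and $U\subseteq V$, $U$ is self-segment-dense in $V$ if $V\subseteq\operatorname{cl}U$ and for all $x,y\in U$, $[x,y]\cap U$ is dense in $[x,y]$. Segment-dense: for convex $V$ and $U\subseteq V$, $U$ is segment-dense in $V$ if for each $x\in V$ there is $y\in U$ such that $x$ is a cluster point of $[x,y]\cap U$. *)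

theory Defs
  imports "HOL-Analysis.Analysis"
begin

text \<open>Real topological vector space with locally convex topology (Hausdorffness is
  provided by the type class t2_space in the statement).\<close>
definition locally_convex_tvs :: "('a::{real_vector,topological_space}) itself \<Rightarrow> bool" where
  "locally_convex_tvs _ \<longleftrightarrow>
     continuous_on UNIV (\<lambda>(x::'a, y::'a). x + y) \<and>
     continuous_on UNIV (\<lambda>(c::real, x::'a). c *\<^sub>R x) \<and>
     (\<forall>(x::'a) S. open S \<and> x \<in> S \<longrightarrow> (\<exists>V. open V \<and> convex V \<and> x \<in> V \<and> V \<subseteq> S))"

definition edom :: "('a \<Rightarrow> ereal) \<Rightarrow> 'a set" where
  "edom f = {x. f x < \<infinity>}"

definition proper_fun :: "('a \<Rightarrow> ereal) \<Rightarrow> bool" where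
  "proper_fun f \<longleftrightarrow> edom f \<noteq> {} \<and> (\<forall>x. f x > -\<infinity>)"

definition convex_efun :: "('a::real_vector \<Rightarrow> ereal) \<Rightarrow> bool" where
  "convex_efun f \<longleftrightarrow> convex {(x, r::real). f x \<le> ereal r}"

definition lsc_efun :: "('a::topological_space \<Rightarrow> ereal) \<Rightarrow> bool" where
  "lsc_efun f \<longleftrightarrow> (\<forall>r::real. closed {x. f x \<le> ereal r})"

definition epi_restr :: "('a \<Rightarrow> ereal) \<Rightarrow> 'a set \<Rightarrow> ('a \<times> real) set" where
  "epi_restr f W = {(w, r). w \<in> W \<and> f w \<le> ereal r}"

text \<open>The function whose epigraph is the closure of the epigraph of f restricted to W.\<close>
definition closure_restr :: "('a::topological_space \<Rightarrow> ereal) \<Rightarrow> 'a set \<Rightarrow> 'a \<Rightarrow> ereal" where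
  "closure_restr f W x = Inf (ereal ` {r. (x, r) \<in> closure (epi_restr f W)})"

definition self_segment_dense :: "('a::{real_vector,topological_space}) set \<Rightarrow> 'a set \<Rightarrow> bool" where
  "self_segment_dense U V \<longleftrightarrow> U \<subseteq> V \<and> V \<subseteq> closure U \<and>
     (\<forall>x\<in>U. \<forall>y\<in>U. closed_segment x y \<subseteq> closure (closed_segment x y \<inter> U))"

definition segment_dense :: "('a::{real_vector,topological_space}) set \<Rightarrow> 'a set \<Rightarrow> bool" where
  "segment_dense U V \<longleftrightarrow> U \<subseteq> V \<and>
     (\<forall>x\<in>V. \<exists>y\<in>U. x islimpt (closed_segment x y \<inter> U))"

end

theory Submission
  imports Defs
begin

text \<open>Call \<open>x\<close> approximable from \<open>U\<close> if every value \<open>r > f x\<close> is beaten by \<open>f\<close> at points of \<open>U\<close>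
  arbitrarily close to \<open>x\<close>. If \<open>z\<close> is a convex combination of a finite \<open>S \<subseteq> U\<close>, self-segment-density
  lets one perturb the weights, moving one point at a time along a segment, until the combination
  lies in \<open>U\<close>. Writing the perturbed weights as \<open>(1 - \<theta>) \<lambda> + \<theta> \<mu>\<close> shows that the new point is
  \<open>(1 - \<theta>) z + \<theta> y\<close> with \<open>y\<close> in the convex hull of \<open>S\<close>, where \<open>f\<close> is bounded above; by convexity its
  value exceeds \<open>f z\<close> by at most \<open>\<theta>\<close> times a constant. So points of \<open>co U\<close> are approximable, and
  segment density plus convexity along \<open>[x, y]\<close> extends this to all of \<open>dom f\<close>. Approximability
  puts \<open>(x, r)\<close> into the closure of the restricted epigraph for every \<open>r > f x\<close>, while lower
  semicontinuity keeps that closure inside the epigraph of \<open>f\<close>; the infimum statement is the case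
  of the whole space as neighbourhood.\<close>

lemma lctvs_continuous_on_add:
  fixes f g :: "'b::topological_space \<Rightarrow> 'a::{real_vector,topological_space}"
  assumes "locally_convex_tvs TYPE('a)" "continuous_on S f" "continuous_on S g"
  shows "continuous_on S (\<lambda>x. f x + g x)"
proof -
  have "continuous_on UNIV (\<lambda>(x::'a, y). x + y)"
    using assms(1) unfolding locally_convex_tvs_def by blast
  then have "continuous_on S ((\<lambda>(x::'a, y). x + y) \<circ> (\<lambda>x. (f x, g x)))"
    by (intro continuous_on_compose continuous_on_Pair assms(2,3)) (auto elim: continuous_on_subset)
  then show ?thesis by (simp add: o_def)
qed

lemma lctvs_continuous_on_scaleR:
  fixes f :: "'b::topological_space \<Rightarrow> real" and g :: "'b \<Rightarrow> 'a::{real_vector,topological_space}"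
  assumes "locally_convex_tvs TYPE('a)" "continuous_on S f" "continuous_on S g"
  shows "continuous_on S (\<lambda>x. f x *\<^sub>R g x)"
proof -
  have "continuous_on UNIV (\<lambda>(c::real, x::'a). c *\<^sub>R x)"
    using assms(1) unfolding locally_convex_tvs_def by blast
  then have "continuous_on S ((\<lambda>(c::real, x::'a). c *\<^sub>R x) \<circ> (\<lambda>x. (f x, g x)))"
    by (intro continuous_on_compose continuous_on_Pair assms(2,3)) (auto elim: continuous_on_subset)
  then show ?thesis by (simp add: o_def)
qed

lemma segment_param_inj:
  fixes a b :: "'a::real_vector"
  assumes "a \<noteq> b" "(1-s) *\<^sub>R a + s *\<^sub>R b = (1-t) *\<^sub>R a + t *\<^sub>R b"
  shows "s = t"
proof -
  have "(s - t) *\<^sub>R (b - a) = 0" using assms(2) by (simp add: algebra_simps)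
  then show ?thesis using assms(1) by simp
qed

text \<open>In a Hausdorff space the parametrisation of a non-degenerate segment is a homeomorphism onto
  its image, being a continuous injection of the compact interval \<open>[0, 1]\<close>.\<close>

lemma segment_param_nhds:
  fixes a b :: "'a::{real_vector,t2_space}"
  assumes LC: "locally_convex_tvs TYPE('a)" and "a \<noteq> b" "d > 0"
  obtains N where "open N" "(1-t) *\<^sub>R a + t *\<^sub>R b \<in> N"
    "\<And>s. 0 \<le> s \<Longrightarrow> s \<le> 1 \<Longrightarrow> (1-s) *\<^sub>R a + s *\<^sub>R b \<in> N \<Longrightarrow> \<bar>s - t\<bar> < d"
proof -
  let ?K = "(\<lambda>s. (1-s) *\<^sub>R a + s *\<^sub>R b) ` ({0..1} - {t-d<..<t+d})"
  have "compact ?K"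
    by (intro compact_continuous_image compact_diff lctvs_continuous_on_add
        lctvs_continuous_on_scaleR LC continuous_intros) auto
  then have "open (- ?K)" by (simp add: compact_imp_closed open_Compl)
  moreover have "(1-t) *\<^sub>R a + t *\<^sub>R b \<in> - ?K"
    using segment_param_inj[OF \<open>a \<noteq> b\<close>] \<open>d > 0\<close> by force
  ultimately show ?thesis
  proof (rule that)
    fix s assume "0 \<le> s" "s \<le> 1" "(1-s) *\<^sub>R a + s *\<^sub>R b \<in> - ?K"
    then have "s \<notin> {0..1} - {t-d<..<t+d}" by blast
    with \<open>0 \<le> s\<close> \<open>s \<le> 1\<close> show "\<bar>s - t\<bar> < d" by auto
  qed
qed

lemma closure_segment_Int_param_near:
  fixes a b :: "'a::{real_vector,t2_space}"
  assumes LC: "locally_convex_tvs TYPE('a)"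
    and p: "(1-t) *\<^sub>R a + t *\<^sub>R b \<in> closure (closed_segment a b \<inter> U)"
    and "0 \<le> t" "t \<le> 1" "d > 0" "open N" "(1-t) *\<^sub>R a + t *\<^sub>R b \<in> N"
  obtains s where "0 \<le> s" "s \<le> 1" "\<bar>s - t\<bar> < d" "(1-s) *\<^sub>R a + s *\<^sub>R b \<in> U \<inter> N"
proof (cases "a = b")
  case True
  then have "a \<in> closure ({a} \<inter> U)" using p by (simp add: scaleR_left_diff_distrib)
  then have "a \<in> U" by (cases "a \<in> U") auto
  then show ?thesis using True assms by (intro that[of t]) (auto simp: scaleR_left_diff_distrib)
next
  case False
  obtain N' where N': "open N'" "(1-t) *\<^sub>R a + t *\<^sub>R b \<in> N'"
    "\<And>s. 0 \<le> s \<Longrightarrow> s \<le> 1 \<Longrightarrow> (1-s) *\<^sub>R a + s *\<^sub>R b \<in> N' \<Longrightarrow> \<bar>s - t\<bar> < d"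
    using segment_param_nhds[OF LC False \<open>d > 0\<close>] by blast
  have "(N \<inter> N') \<inter> (closed_segment a b \<inter> U) \<noteq> {}"
    using p N' assms open_Int_closure_eq_empty[of "N \<inter> N'"] by blast
  then obtain s where "0 \<le> s" "s \<le> 1" "(1-s) *\<^sub>R a + s *\<^sub>R b \<in> N \<inter> N' \<inter> U"
    unfolding closed_segment_def by blast
  with N'(3) show ?thesis by (intro that) auto
qed

lemma lsc_efun_closed_epigraph:
  fixes f :: "'a::topological_space \<Rightarrow> ereal"
  assumes "lsc_efun f"
  shows "closed {(x, r::real). f x \<le> ereal r}"
  unfolding closed_def
proof (rule open_prod_intro)
  fix p assume "p \<in> - {(x, r::real). f x \<le> ereal r}"
  then obtain x r where p: "p = (x, r)" "ereal r < f x" by (cases p) auto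
  then obtain s where s: "ereal r < ereal s" "ereal s < f x" using ereal_dense2 by blast
  have "(- {x. f x \<le> ereal s}) \<times> {..<s} \<subseteq> - {(x, r). f x \<le> ereal r}"
    by (auto dest: order_trans[where z = "ereal s"])
  moreover have "open (- {x. f x \<le> ereal s})" using assms unfolding lsc_efun_def by auto
  ultimately show "\<exists>A B. open A \<and> open B \<and> p \<in> A \<times> B \<and> A \<times> B \<subseteq> - {(x, r). f x \<le> ereal r}"
    using p s by (intro exI[of _ "- {x. f x \<le> ereal s}"] exI[of _ "{..<s}"]) auto
qed

lemma convex_efunD:
  assumes "convex_efun f" "f x \<le> ereal a" "f y \<le> ereal b" "0 \<le> s" "s \<le> 1"
  shows "f ((1-s) *\<^sub>R x + s *\<^sub>R y) \<le> ereal ((1-s) * a + s * b)"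
proof -
  have "(1-s) *\<^sub>R (x, a) + s *\<^sub>R (y, b) \<in> {(x, r::real). f x \<le> ereal r}"
    using assms unfolding convex_efun_def by (intro convexD) auto
  then show ?thesis by simp
qed

lemma convex_efun_sublevel_convex:
  assumes "convex_efun f"
  shows "convex {x. f x \<le> ereal M}"
proof (rule convexI)
  fix x y and u v :: real
  assume "x \<in> {x. f x \<le> ereal M}" "y \<in> {x. f x \<le> ereal M}" "0 \<le> u" "0 \<le> v" "u + v = 1"
  then have "u *\<^sub>R (x, M) + v *\<^sub>R (y, M) \<in> {(x, r::real). f x \<le> ereal r}"
    using assms unfolding convex_efun_def by (intro convexD) auto
  then show "u *\<^sub>R x + v *\<^sub>R y \<in> {x. f x \<le> ereal M}"
    using \<open>u + v = 1\<close> by (simp flip: distrib_right)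
qed

lemma finite_edom_bounded:
  assumes "finite S" "S \<subseteq> edom f"
  obtains M where "\<forall>v\<in>S. f v \<le> ereal M"
proof
  let ?M = "Max (insert 0 ((\<lambda>v. real_of_ereal (f v)) ` S))"
  show "\<forall>v\<in>S. f v \<le> ereal ?M"
  proof
    fix v assume "v \<in> S"
    then have "f v \<le> ereal (real_of_ereal (f v))"
      using assms(2) unfolding edom_def by (cases "f v") auto
    also have "\<dots> \<le> ereal ?M" using assms(1) \<open>v \<in> S\<close> by simp
    finally show "f v \<le> ereal ?M" .
  qed
qed

lemma proper_fun_real_of_ereal:
  assumes "proper_fun f" "x \<in> edom f"
  shows "f x = ereal (real_of_ereal (f x))"
  using assms unfolding proper_fun_def edom_def by (cases "f x") auto

lemma ereal_le_if_real_bounds: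
  assumes "\<And>r. a < ereal r \<Longrightarrow> b \<le> ereal r"
  shows "b \<le> a"
proof (rule dense_ge)
  fix y assume "a < y"
  then obtain r where "a < ereal r" "ereal r < y" using ereal_dense2 by blast
  then show "b \<le> y" using assms by (meson order.trans less_imp_le)
qed

lemma convex_comb_near_left_less:
  fixes a b r :: real
  assumes "a < r"
  obtains \<delta> where "\<delta> > 0" "\<And>s. 0 \<le> s \<Longrightarrow> s < \<delta> \<Longrightarrow> (1-s) * a + s * b < r"
proof
  let ?K = "\<bar>b - a\<bar> + 1"
  show "(r - a) / ?K > 0" using assms by simp
  fix s assume s: "0 \<le> s" "s < (r - a) / ?K"
  have "(1-s) * a + s * b \<le> a + s * ?K"
    using s(1) mult_left_mono[of "b - a" ?K s] by (simp add: algebra_simps)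
  also have "s * ?K < r - a" using s(2) by (simp add: pos_less_divide_eq)
  finally show "(1-s) * a + s * b < r" by simp
qed

lemma finite_pos_lower_bound:
  fixes g :: "'a \<Rightarrow> real"
  assumes "finite A" "\<And>a. a \<in> A \<Longrightarrow> 0 < g a"
  obtains d where "0 < d" "\<And>a. a \<in> A \<Longrightarrow> d \<le> g a"
proof
  show "0 < Min (insert 1 (g ` A))" using assms by (simp add: Min_gr_iff)
  show "Min (insert 1 (g ` A)) \<le> g a" if "a \<in> A" for a using assms that by simp
qed

lemma abs_rescaled_weight_diff_less:
  fixes s t m l d :: real
  assumes "0 \<le> s" "s \<le> 1" "0 \<le> l" "l \<le> 1" "\<bar>m - l\<bar> < d/2" "\<bar>s - t\<bar> < d/2"
  shows "\<bar>(1-s) * m - (1-t) * l\<bar> < d"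
proof -
  have "(1-s) * m - (1-t) * l = (1-s) * (m - l) + (t - s) * l" by (simp add: algebra_simps)
  moreover have "\<bar>(1-s) * (m - l)\<bar> \<le> \<bar>m - l\<bar>"
    using assms(1,2) by (simp add: abs_mult mult_left_le_one_le)
  moreover have "\<bar>(t - s) * l\<bar> \<le> \<bar>s - t\<bar>"
    using assms(3,4) by (simp add: abs_mult abs_minus_commute mult_left_le)
  ultimately show ?thesis using assms(5,6) by linarith
qed

lemma convex_weights_split:
  fixes l m :: "'a \<Rightarrow> real"
  assumes "sum l S = 1" "sum m S = 1" "0 < \<theta>" "\<forall>v\<in>S. (1-\<theta>) * l v \<le> m v"
  obtains w where "\<forall>v\<in>S. 0 \<le> w v" "sum w S = 1" "\<forall>v\<in>S. m v = (1-\<theta>) * l v + \<theta> * w v"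
proof
  define w where "w v = (m v - (1-\<theta>) * l v) / \<theta>" for v
  show "\<forall>v\<in>S. 0 \<le> w v" using assms(3,4) unfolding w_def by simp
  have "sum w S = (sum m S - (1-\<theta>) * sum l S) / \<theta>"
    unfolding w_def by (simp add: sum_divide_distrib[symmetric] sum_subtractf sum_distrib_left)
  then show "sum w S = 1" using assms(1-3) by simp
  show "\<forall>v\<in>S. m v = (1-\<theta>) * l v + \<theta> * w v" using assms(3) unfolding w_def by simp
qed

lemma convex_weights_remove:
  fixes l :: "'a::real_vector \<Rightarrow> real"
  assumes "finite S" "u \<notin> S" "sum l (insert u S) = 1" "l u < 1"
  shows "sum (\<lambda>v. l v / (1 - l u)) S = 1"
    and "(\<Sum>v\<in>insert u S. l v *\<^sub>R v) = (1 - l u) *\<^sub>R (\<Sum>v\<in>S. (l v / (1 - l u)) *\<^sub>R v) + l u *\<^sub>R u"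
proof -
  show "sum (\<lambda>v. l v / (1 - l u)) S = 1"
    using assms by (simp add: sum_divide_distrib[symmetric])
  show "(\<Sum>v\<in>insert u S. l v *\<^sub>R v) = (1 - l u) *\<^sub>R (\<Sum>v\<in>S. (l v / (1 - l u)) *\<^sub>R v) + l u *\<^sub>R u"
    using assms by (simp add: scaleR_sum_right add.commute)
qed

lemma convex_weights_insert:
  fixes m' :: "'a::real_vector \<Rightarrow> real"
  assumes "finite S" "u \<notin> S" "\<forall>v\<in>S. 0 \<le> m' v" "sum m' S = 1" "0 \<le> s" "s \<le> 1"
  defines "m \<equiv> \<lambda>v. if v = u then s else (1-s) * m' v"
  shows "\<forall>v\<in>insert u S. 0 \<le> m v" and "sum m (insert u S) = 1"
    and "(\<Sum>v\<in>insert u S. m v *\<^sub>R v) = (1-s) *\<^sub>R (\<Sum>v\<in>S. m' v *\<^sub>R v) + s *\<^sub>R u"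
proof -
  have m_S: "m v = (1-s) * m' v" if "v \<in> S" for v using assms(2) that unfolding m_def by auto
  show "\<forall>v\<in>insert u S. 0 \<le> m v" using assms(3,5,6) unfolding m_def by auto
  have "sum m (insert u S) = s + (1-s) * sum m' S"
    using assms(1,2) m_S by (simp add: m_def sum_distrib_left)
  then show "sum m (insert u S) = 1" using assms(4) by simp
  show "(\<Sum>v\<in>insert u S. m v *\<^sub>R v) = (1-s) *\<^sub>R (\<Sum>v\<in>S. m' v *\<^sub>R v) + s *\<^sub>R u"
    using assms(1,2) m_S by (simp add: m_def scaleR_sum_right add.commute)
qed

text \<open>Induction on the number of points: the last point \<open>u\<close> is moved along the segment from
  \<open>u\<close> to a perturbed combination of the remaining points, which lies in \<open>U\<close> by induction.\<close>

lemma convex_combination_perturb: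
  fixes U :: "'a::{real_vector,t2_space} set"
  assumes LC: "locally_convex_tvs TYPE('a)"
    and seg: "\<And>x y. x \<in> U \<Longrightarrow> y \<in> U \<Longrightarrow> closed_segment x y \<subseteq> closure (closed_segment x y \<inter> U)"
    and "finite S" "S \<subseteq> U" "\<forall>v\<in>S. 0 \<le> l v" "sum l S = 1"
    and "d > 0" "open N" "(\<Sum>v\<in>S. l v *\<^sub>R v) \<in> N"
  shows "\<exists>m. (\<forall>v\<in>S. 0 \<le> m v) \<and> sum m S = 1 \<and> (\<forall>v\<in>S. \<bar>m v - l v\<bar> < d) \<and>
    (\<Sum>v\<in>S. m v *\<^sub>R v) \<in> U \<inter> N"
  using assms(3-)
proof (induction S arbitrary: l d N rule: finite_induct)
  case empty
  then show ?case by simp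
next
  case (insert u S)
  have "u \<in> U" "S \<subseteq> U" "\<forall>v\<in>S. 0 \<le> l v" "d > 0" "open N" using insert.prems by simp_all
  define t where "t = l u"
  have "0 \<le> t" "t \<le> 1"
    using insert member_le_sum[of u "insert u S" l] unfolding t_def by auto
  show ?case
  proof (cases "t = 1")
    case True
    then have "\<forall>v\<in>S. l v = 0"
      using insert sum_nonneg_eq_0_iff[of S l] unfolding t_def by auto
    then have "(\<Sum>v\<in>insert u S. l v *\<^sub>R v) = u" using insert True unfolding t_def by simp
    then show ?thesis using insert \<open>u \<in> U\<close> by (intro exI[of _ l]) auto
  next
    case False
    then have "t < 1" using \<open>t \<le> 1\<close> by simp
    define l' where "l' v = l v / (1 - t)" for v
    have l': "\<forall>v\<in>S. 0 \<le> l' v" "sum l' S = 1"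
      "(\<Sum>v\<in>insert u S. l v *\<^sub>R v) = (1-t) *\<^sub>R (\<Sum>v\<in>S. l' v *\<^sub>R v) + t *\<^sub>R u"
      using \<open>\<forall>v\<in>S. 0 \<le> l v\<close> \<open>t < 1\<close> convex_weights_remove[OF insert(1,2)] insert.prems(3)
      unfolding l'_def t_def by simp_all
    have "\<forall>v\<in>S. l' v \<le> 1" using l' insert(1) member_le_sum[of _ S l'] by simp
    define N' where "N' = (\<lambda>x. (1-t) *\<^sub>R x + t *\<^sub>R u) -` N"
    have "continuous_on UNIV (\<lambda>x. (1-t) *\<^sub>R x + t *\<^sub>R u)"
      by (intro lctvs_continuous_on_add lctvs_continuous_on_scaleR LC continuous_intros)
    then have "open N'" unfolding N'_def using \<open>open N\<close> continuous_on_open_vimage[of UNIV] by auto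
    have "(\<Sum>v\<in>S. l' v *\<^sub>R v) \<in> N'" using insert.prems(6) l'(3) unfolding N'_def by simp
    then obtain m' where m': "\<forall>v\<in>S. 0 \<le> m' v" "sum m' S = 1" "\<forall>v\<in>S. \<bar>m' v - l' v\<bar> < d/2"
      "(\<Sum>v\<in>S. m' v *\<^sub>R v) \<in> U \<inter> N'"
      using insert.IH[OF \<open>S \<subseteq> U\<close> l'(1,2), of "d/2" N'] \<open>open N'\<close> \<open>d > 0\<close> by auto
    define a where "a = (\<Sum>v\<in>S. m' v *\<^sub>R v)"
    have "a \<in> U" "(1-t) *\<^sub>R a + t *\<^sub>R u \<in> N" using m'(4) unfolding a_def N'_def by auto
    moreover have "(1-t) *\<^sub>R a + t *\<^sub>R u \<in> closed_segment a u"
      using \<open>0 \<le> t\<close> \<open>t < 1\<close> unfolding closed_segment_def by auto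
    ultimately obtain s where s: "0 \<le> s" "s \<le> 1" "\<bar>s - t\<bar> < d/2" "(1-s) *\<^sub>R a + s *\<^sub>R u \<in> U \<inter> N"
      using closure_segment_Int_param_near[OF LC _ \<open>0 \<le> t\<close> \<open>t \<le> 1\<close> _ \<open>open N\<close>, of a u U "d/2"]
        seg[OF \<open>a \<in> U\<close> \<open>u \<in> U\<close>] \<open>d > 0\<close> by auto
    define m where "m v = (if v = u then s else (1-s) * m' v)" for v
    have m: "\<forall>v\<in>insert u S. 0 \<le> m v" "sum m (insert u S) = 1"
      "(\<Sum>v\<in>insert u S. m v *\<^sub>R v) \<in> U \<inter> N"
      using convex_weights_insert[OF insert(1,2) m'(1,2) s(1,2)] s(4) unfolding m_def a_def by simp_all
    have "\<bar>m v - l v\<bar> < d" if "v \<in> insert u S" for v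
    proof (cases "v = u")
      case True
      then show ?thesis using s(3) \<open>d > 0\<close> unfolding m_def t_def by simp
    next
      case False
      then have "v \<in> S" "m v = (1-s) * m' v" "l v = (1-t) * l' v"
        using that \<open>t < 1\<close> unfolding m_def l'_def by simp_all
      then show ?thesis
        using abs_rescaled_weight_diff_less[OF s(1,2), of "l' v" "m' v" d t]
          l'(1) m'(3) s(3) \<open>\<forall>v\<in>S. l' v \<le> 1\<close> by simp
    qed
    with m show ?thesis by blast
  qed
qed

lemma convex_hull_step_into:
  fixes U :: "'a::{real_vector,t2_space} set"
  assumes LC: "locally_convex_tvs TYPE('a)"
    and seg: "\<And>x y. x \<in> U \<Longrightarrow> y \<in> U \<Longrightarrow> closed_segment x y \<subseteq> closure (closed_segment x y \<inter> U)"
    and S: "finite S" "S \<subseteq> U" and "z \<in> convex hull S" and N: "open N" "z \<in> N" and "0 < \<theta>"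
  obtains y where "y \<in> convex hull S" "(1-\<theta>) *\<^sub>R z + \<theta> *\<^sub>R y \<in> U \<inter> N"
proof -
  obtain l where l: "\<forall>v\<in>S. 0 \<le> l v" "sum l S = 1" "(\<Sum>v\<in>S. l v *\<^sub>R v) = z"
    using \<open>z \<in> convex hull S\<close> unfolding convex_hull_finite[OF S(1)] by blast
  obtain d where "0 < d" and d: "\<And>v. v \<in> {v\<in>S. 0 < l v} \<Longrightarrow> d \<le> \<theta> * l v"
    using finite_pos_lower_bound[of "{v\<in>S. 0 < l v}" "\<lambda>v. \<theta> * l v"] S(1) \<open>0 < \<theta>\<close> by auto
  obtain m where m: "\<forall>v\<in>S. 0 \<le> m v" "sum m S = 1" "\<forall>v\<in>S. \<bar>m v - l v\<bar> < d"
      "(\<Sum>v\<in>S. m v *\<^sub>R v) \<in> U \<inter> N"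
    using convex_combination_perturb[OF LC seg S l(1,2) \<open>0 < d\<close> N(1)] N(2) l(3) by blast
  have "\<forall>v\<in>S. (1-\<theta>) * l v \<le> m v"
  proof
    fix v assume "v \<in> S"
    show "(1-\<theta>) * l v \<le> m v"
    proof (cases "0 < l v")
      case True
      then show ?thesis using d[of v] m(3) \<open>v \<in> S\<close> by (force simp: algebra_simps)
    next
      case False
      then show ?thesis using l(1) m(1) \<open>v \<in> S\<close> by force
    qed
  qed
  then obtain w where w: "\<forall>v\<in>S. 0 \<le> w v" "sum w S = 1" "\<forall>v\<in>S. m v = (1-\<theta>) * l v + \<theta> * w v"
    using convex_weights_split[OF l(2) m(2) \<open>0 < \<theta>\<close>] by blast
  define y where "y = (\<Sum>v\<in>S. w v *\<^sub>R v)"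
  have "y \<in> convex hull S" unfolding convex_hull_finite[OF S(1)] y_def using w(1,2) by blast
  have "(\<Sum>v\<in>S. m v *\<^sub>R v) = (\<Sum>v\<in>S. (1-\<theta>) *\<^sub>R (l v *\<^sub>R v) + \<theta> *\<^sub>R (w v *\<^sub>R v))"
    using w(3) by (intro sum.cong) (simp_all add: scaleR_add_left)
  then have "(\<Sum>v\<in>S. m v *\<^sub>R v) = (1-\<theta>) *\<^sub>R z + \<theta> *\<^sub>R y"
    unfolding y_def l(3)[symmetric] by (simp add: sum.distrib scaleR_sum_right)
  then show ?thesis using that \<open>y \<in> convex hull S\<close> m(4) by simp
qed

definition approximable_from :: "'a::topological_space set \<Rightarrow> ('a \<Rightarrow> ereal) \<Rightarrow> 'a \<Rightarrow> bool" where
  "approximable_from U f x \<longleftrightarrow>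
     (\<forall>N r. open N \<longrightarrow> x \<in> N \<longrightarrow> f x < ereal r \<longrightarrow> (\<exists>w\<in>U \<inter> N. f w < ereal r))"

lemma approximable_from_if_approached:
  assumes "\<And>N r. open N \<Longrightarrow> x \<in> N \<Longrightarrow> f x < ereal r \<Longrightarrow>
    \<exists>z\<in>N. approximable_from U f z \<and> f z < ereal r"
  shows "approximable_from U f x"
  using assms unfolding approximable_from_def by meson

lemma approximable_from_convex_hull:
  fixes U :: "'a::{real_vector,t2_space} set" and f :: "'a \<Rightarrow> ereal"
  assumes LC: "locally_convex_tvs TYPE('a)" and cf: "convex_efun f" and pf: "proper_fun f"
    and "U \<subseteq> edom f"
    and seg: "\<And>x y. x \<in> U \<Longrightarrow> y \<in> U \<Longrightarrow> closed_segment x y \<subseteq> closure (closed_segment x y \<inter> U)"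
    and "z \<in> convex hull U"
  shows "approximable_from U f z"
  unfolding approximable_from_def
proof (intro allI impI)
  fix N r assume N: "open N" "z \<in> N" and "f z < ereal r"
  obtain S l where S: "finite S" "S \<subseteq> U" "\<forall>v\<in>S. 0 \<le> l v" "sum l S = 1" "(\<Sum>v\<in>S. l v *\<^sub>R v) = z"
    using \<open>z \<in> convex hull U\<close> unfolding convex_hull_explicit by blast
  then have "z \<in> convex hull S" unfolding convex_hull_finite[OF S(1)] by blast
  obtain M where "\<forall>v\<in>S. f v \<le> ereal M"
    using finite_edom_bounded[OF S(1)] S(2) \<open>U \<subseteq> edom f\<close> by blast
  then have M: "f y \<le> ereal M" if "y \<in> convex hull S" for y
    using hull_minimal[of S "{x. f x \<le> ereal M}"] convex_efun_sublevel_convex[OF cf] that by blast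
  define c where "c = real_of_ereal (f z)"
  have "z \<in> edom f" using \<open>f z < ereal r\<close> unfolding edom_def by auto
  then have fz: "f z = ereal c" using proper_fun_real_of_ereal[OF pf] unfolding c_def by blast
  obtain \<delta> where "\<delta> > 0" and \<delta>: "\<And>s. 0 \<le> s \<Longrightarrow> s < \<delta> \<Longrightarrow> (1-s) * c + s * M < r"
    using convex_comb_near_left_less[of c r] \<open>f z < ereal r\<close> fz by auto
  define \<theta> where "\<theta> = min 1 (\<delta>/2)"
  have \<theta>: "0 < \<theta>" "\<theta> \<le> 1" "\<theta> < \<delta>" using \<open>\<delta> > 0\<close> unfolding \<theta>_def by auto
  obtain y where "y \<in> convex hull S" and y: "(1-\<theta>) *\<^sub>R z + \<theta> *\<^sub>R y \<in> U \<inter> N"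
    using convex_hull_step_into[OF LC seg S(1,2) \<open>z \<in> convex hull S\<close> N \<theta>(1)] by blast
  have "f ((1-\<theta>) *\<^sub>R z + \<theta> *\<^sub>R y) \<le> ereal ((1-\<theta>) * c + \<theta> * M)"
    using convex_efunD[OF cf _ M[OF \<open>y \<in> convex hull S\<close>]] \<theta> fz by simp
  also have "\<dots> < ereal r" using \<delta>[of \<theta>] \<theta> by simp
  finally show "\<exists>w\<in>U \<inter> N. f w < ereal r" using y by blast
qed

lemma approximable_from_edom:
  fixes U :: "'a::{real_vector,t2_space} set" and f :: "'a \<Rightarrow> ereal"
  assumes LC: "locally_convex_tvs TYPE('a)" and cf: "convex_efun f" and pf: "proper_fun f"
    and sd: "segment_dense (convex hull U) (edom f)"
    and hull: "\<And>z. z \<in> convex hull U \<Longrightarrow> approximable_from U f z"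
    and "x \<in> edom f"
  shows "approximable_from U f x"
proof (rule approximable_from_if_approached)
  fix N r assume N: "open N" "x \<in> N" and "f x < ereal r"
  obtain y where "y \<in> convex hull U" and y: "x islimpt (closed_segment x y \<inter> convex hull U)"
    using sd \<open>x \<in> edom f\<close> unfolding segment_dense_def by blast
  have "y \<in> edom f" using sd \<open>y \<in> convex hull U\<close> unfolding segment_dense_def by blast
  have "x \<noteq> y" using y islimpt_UNIV_iff by (force simp: islimpt_def)
  define a where "a = real_of_ereal (f x)"
  define b where "b = real_of_ereal (f y)"
  have fx: "f x = ereal a" and fy: "f y = ereal b"
    using proper_fun_real_of_ereal[OF pf] \<open>x \<in> edom f\<close> \<open>y \<in> edom f\<close> unfolding a_def b_def by auto
  obtain \<delta> where "\<delta> > 0" and \<delta>: "\<And>s. 0 \<le> s \<Longrightarrow> s < \<delta> \<Longrightarrow> (1-s) * a + s * b < r"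
    using convex_comb_near_left_less[of a r] \<open>f x < ereal r\<close> fx by auto
  obtain N' where "open N'" and "(1-0) *\<^sub>R x + 0 *\<^sub>R y \<in> N'"
    and N': "\<And>s. 0 \<le> s \<Longrightarrow> s \<le> 1 \<Longrightarrow> (1-s) *\<^sub>R x + s *\<^sub>R y \<in> N' \<Longrightarrow> \<bar>s - 0\<bar> < \<delta>"
    by (rule segment_param_nhds[OF LC \<open>x \<noteq> y\<close> \<open>\<delta> > 0\<close>, where t = 0]) blast
  then have "x \<in> N'" by simp
  obtain z where z: "z \<in> closed_segment x y" "z \<in> convex hull U" "z \<in> N \<inter> N'"
    using islimptE[OF y, of "N \<inter> N'"] N \<open>open N'\<close> \<open>x \<in> N'\<close> by blast
  then obtain s where s: "0 \<le> s" "s \<le> 1" "z = (1-s) *\<^sub>R x + s *\<^sub>R y"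
    unfolding closed_segment_def by blast
  have "f z \<le> ereal ((1-s) * a + s * b)"
    using convex_efunD[OF cf _ _ s(1,2)] fx fy s(3) by simp
  also have "\<dots> < ereal r" using \<delta> N' s z(3) by simp
  finally show "\<exists>z\<in>N. approximable_from U f z \<and> f z < ereal r" using hull z by blast
qed

lemma closure_restr_eq_if_approximable:
  fixes f :: "'a::topological_space \<Rightarrow> ereal"
  assumes "lsc_efun f" "U \<subseteq> W" and approx: "\<And>x. x \<in> edom f \<Longrightarrow> approximable_from U f x"
  shows "closure_restr f W = f"
proof
  fix x
  have "closure (epi_restr f W) \<subseteq> {(x, r::real). f x \<le> ereal r}"
    by (rule closure_minimal) (auto simp: epi_restr_def lsc_efun_closed_epigraph[OF assms(1)])
  then have "f x \<le> closure_restr f W x"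
    unfolding closure_restr_def by (intro Inf_greatest) auto
  moreover have "closure_restr f W x \<le> f x"
  proof (rule ereal_le_if_real_bounds)
    fix r assume "f x < ereal r"
    have "(x, r) \<in> closure (epi_restr f W)"
    proof (rule ccontr)
      assume "(x, r) \<notin> closure (epi_restr f W)"
      then have "open (- closure (epi_restr f W))" "(x, r) \<in> - closure (epi_restr f W)" by auto
      then obtain A B where AB: "open A" "open B" "(x, r) \<in> A \<times> B" "A \<times> B \<subseteq> - closure (epi_restr f W)"
        by (rule open_prod_elim)
      have "x \<in> edom f" using \<open>f x < ereal r\<close> unfolding edom_def by auto
      then obtain w where "w \<in> U \<inter> A" "f w < ereal r"
        using approx \<open>f x < ereal r\<close> AB(1,3) unfolding approximable_from_def by blast
      then have "(w, r) \<in> epi_restr f W \<inter> A \<times> B"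
        using \<open>U \<subseteq> W\<close> AB(3) unfolding epi_restr_def by auto
      then show False using AB(4) closure_subset by blast
    qed
    then show "closure_restr f W x \<le> ereal r"
      unfolding closure_restr_def by (intro Inf_lower) auto
  qed
  ultimately show "closure_restr f W x = f x" by (rule antisym[rotated])
qed

lemma INF_eq_if_approximable:
  assumes "\<And>x. x \<in> edom f \<Longrightarrow> approximable_from U f x"
  shows "(INF x\<in>U. f x) = (INF x. f x)"
proof (rule antisym)
  show "(INF x\<in>U. f x) \<le> (INF x. f x)"
  proof (rule INF_greatest, rule ereal_le_if_real_bounds)
    fix x r assume "f x < ereal r"
    then have "x \<in> edom f" unfolding edom_def by auto
    then obtain w where "w \<in> U" "f w < ereal r"
      using assms \<open>f x < ereal r\<close> unfolding approximable_from_def by blast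
    then show "(INF x\<in>U. f x) \<le> ereal r" by (meson INF_lower less_imp_le order.trans)
  qed
qed (rule INF_superset_mono; simp)

theorem mainTheorem9:
  fixes f :: "'a::{real_vector,t2_space} \<Rightarrow> ereal" and U :: "'a set"
  assumes "locally_convex_tvs TYPE('a)"
    and "proper_fun f" and "convex_efun f" and "lsc_efun f"
    and "U \<subseteq> edom f"
    and "self_segment_dense U (edom f)"
    and "segment_dense (convex hull U) (edom f)"
  shows "closure_restr f U = f \<and> closure_restr f (convex hull U) = f \<and>
         (INF x\<in>U. f x) = (INF x. f x)"
proof -
  have "approximable_from U f z" if "z \<in> convex hull U" for z
    using approximable_from_convex_hull[OF assms(1,3,2,5) _ that] assms(6) that
    unfolding self_segment_dense_def by blast
  then have approx: "approximable_from U f x" if "x \<in> edom f" for x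
    using approximable_from_edom[OF assms(1,3,2,7) _ that] by blast
  show ?thesis
    using closure_restr_eq_if_approximable[OF assms(4) order_refl approx]
      closure_restr_eq_if_approximable[OF assms(4) hull_subset approx]
      INF_eq_if_approximable[OF approx] by blast
qed

end
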